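(* Let $k\ge2$ be an integer and $c\in(0,1)$. Let $(M_n)_{n\ge1}$ be integers with $1\le M_n\le kn-1$ and $M_n/(kn)\to c$ as $n\to\infty$. Then \[ \lim_{n\to\infty} P_{n,k}(\mathcal{S}(n,k;M_n))=-(1-c)^k\sum_{l=1}^{k-1}\binom kl\Big(\frac c{1-c}\Big)^l\frac l{k-l} +k\sum_{l=1}^{k-1}\binom kl c^l\int_0^{1-c}\frac{y^{k-l-1}}{1-y^k}\,dy-c^k\log\big(1-(1-c)^k\big). \]
   Context: Fix integers $k\ge2$, $n\ge1$. There are $kn$ items, $k$ items at each of the ranks $1,2,\dots,n$ (rank $n$ is highest). The items are revealed one at a time in a uniformly random order, i.e. the sequence of ranks is a uniformly random permutation of the multiset $\{1^k,2^k,\dots,n^k\}$; $P_{n,k}$ denotes this uniform probability. For $M\in\{1,\dots,kn-1\}$, the strategy $\mathcal{S}(n,k;M)$ lets the first $M$ items pass and then selects the first later-arriving item whose rank is greater than or equal to the highest rank among the first $M$ items (if such an item exists; otherwise nothing is selected). $P_{n,k}(\mathcal{S}(n,k;M))$ denotes the probability that this strategy selects an item of rank $n$. *)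

theory Defs
  imports "HOL-Analysis.Analysis" "HOL-Combinatorics.Multiset_Permutations"
begin

definition rank_mset :: "nat \<Rightarrow> nat \<Rightarrow> nat multiset" where
  "rank_mset n k = (\<Sum>i\<in>{1..n}. replicate_mset k i)"

text \<open>All possible arrival sequences of ranks (equally likely).\<close>
definition arrivals :: "nat \<Rightarrow> nat \<Rightarrow> nat list set" where
  "arrivals n k = permutations_of_multiset (rank_mset n k)"

definition strategy_wins :: "nat \<Rightarrow> nat \<Rightarrow> nat list \<Rightarrow> bool" where
  "strategy_wins n M xs =
     (case find (\<lambda>r. Max (set (take M xs)) \<le> r) (drop M xs) of
        Some r \<Rightarrow> r = n
      | None \<Rightarrow> False)"

definition win_prob :: "nat \<Rightarrow> nat \<Rightarrow> nat \<Rightarrow> real" where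
  "win_prob n k M =
     real (card {xs \<in> arrivals n k. strategy_wins n M xs}) / real (card (arrivals n k))"

end

theory Submission
  imports Defs
begin

text \<open>Label the items so that the rank of an item is a function of its label; a uniformly random
  order of the labelled items induces the uniform distribution on arrival sequences. Given the set
  \<open>S\<close> of the first \<open>M\<close> items, the strategy selects the first later item whose rank is at least
  the top rank \<open>m\<close> of \<open>S\<close>, and this item is uniformly distributed among the remaining items of
  rank at least \<open>m\<close>. So the conditional winning probability depends only on \<open>m\<close> and on the
  number \<open>j\<close> of items of rank \<open>m\<close> in \<open>S\<close>, and counting the sets \<open>S\<close> with given \<open>m\<close> and \<open>j\<close>
  writes the winning probability as a finite series in \<open>t = n - m\<close>. Each term converges as
  \<open>n \<rightarrow> \<infinity>\<close> and the terms are dominated by a geometric series, so by Tannery's theorem the limit is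
  the sum of the limiting series. That sum is evaluated by expanding \<open>1 / (1 - y\<^sup>k)\<close> into a
  geometric series under the integral and by the series of \<open>- ln (1 - z)\<close>.\<close>

section \<open>Random permutations of a finite set\<close>

lemma find_map: "find P (map f xs) = map_option f (find (P \<circ> f) xs)"
  by (induction xs) auto

lemma find_Some_in_set: "find P xs = Some x \<Longrightarrow> x \<in> set xs \<and> P x"
  by (induction xs) (auto split: if_splits)

text \<open>A transposition of two elements satisfying \<open>Q\<close> maps the permutations whose first element
  satisfying \<open>Q\<close> is the one into those where it is the other.\<close>
lemma card_find_eq_Some_le:
  assumes T: "finite T" and y: "y \<in> T" "Q y" and y': "y' \<in> T" "Q y'"
  shows "card {zs \<in> permutations_of_set T. find Q zs = Some y} \<le>
    card {zs \<in> permutations_of_set T. find Q zs = Some y'}"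
proof -
  define \<sigma> where "\<sigma> = Transposition.transpose y y'"
  have "map \<sigma> ` {zs \<in> permutations_of_set T. find Q zs = Some y} \<subseteq>
      {zs \<in> permutations_of_set T. find Q zs = Some y'}"
  proof
    fix zs' assume "zs' \<in> map \<sigma> ` {zs \<in> permutations_of_set T. find Q zs = Some y}"
    then obtain zs where zs: "zs \<in> permutations_of_set T" "find Q zs = Some y" "zs' = map \<sigma> zs"
      by auto
    have "Q (\<sigma> z) \<longleftrightarrow> Q z" for z
      using y y' by (cases "z = y"; cases "z = y'") (auto simp: \<sigma>_def)
    then have "find (Q \<circ> \<sigma>) zs = find Q zs"
      by (intro find_cong) auto
    moreover have "map \<sigma> ` permutations_of_set T = permutations_of_set T"
      using y y' unfolding \<sigma>_def by (intro permutations_of_set_image_permutes permutes_swap_id)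
    ultimately show "zs' \<in> {zs \<in> permutations_of_set T. find Q zs = Some y'}"
      using zs by (auto simp: find_map \<sigma>_def)
  qed
  moreover have "inj_on (map \<sigma>) {zs \<in> permutations_of_set T. find Q zs = Some y}"
    by (rule inj_on_subset[OF _ subset_UNIV]) (simp add: \<sigma>_def inj_transpose)
  ultimately show ?thesis
    using T by (intro card_inj_on_le) auto
qed

lemma card_find_eq_Some_mult:
  assumes T: "finite T" and x: "x \<in> T" "Q x"
  shows "card {zs \<in> permutations_of_set T. find Q zs = Some x} * card {y \<in> T. Q y} = fact (card T)"
proof -
  define H where "H y = {zs \<in> permutations_of_set T. find Q zs = Some y}" for y
  define QT where "QT = {y \<in> T. Q y}"
  have "permutations_of_set T = (\<Union>y\<in>QT. H y)"
  proof (intro equalityI subsetI)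
    fix zs assume zs: "zs \<in> permutations_of_set T"
    then have "find Q zs \<noteq> None"
      using x by (auto simp: find_None_iff permutations_of_set_def)
    then obtain y where "find Q zs = Some y" by blast
    then show "zs \<in> (\<Union>y\<in>QT. H y)"
      using zs find_Some_in_set[of Q zs y] by (auto simp: H_def QT_def permutations_of_set_def)
  qed (auto simp: H_def)
  then have "fact (card T) = card (\<Union>y\<in>QT. H y)"
    using T by (metis card_permutations_of_set)
  also have "\<dots> = (\<Sum>y\<in>QT. card (H y))"
    using T by (intro card_UN_disjoint) (auto simp: H_def QT_def)
  also have "\<dots> = (\<Sum>y\<in>QT. card (H x))"
    using T x by (intro sum.cong refl antisym) (auto simp: H_def QT_def card_find_eq_Some_le)
  finally show ?thesis
    by (simp add: H_def QT_def)
qed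

lemma card_find_in_mult:
  assumes T: "finite T" and G: "G \<subseteq> {x \<in> T. Q x}"
  shows "card {zs \<in> permutations_of_set T. \<exists>x\<in>G. find Q zs = Some x} * card {x \<in> T. Q x} =
    card G * fact (card T)"
proof -
  have "finite G"
    using finite_subset[OF G] T by simp
  have "{zs \<in> permutations_of_set T. \<exists>x\<in>G. find Q zs = Some x} =
      (\<Union>x\<in>G. {zs \<in> permutations_of_set T. find Q zs = Some x})"
    by auto
  then have "card {zs \<in> permutations_of_set T. \<exists>x\<in>G. find Q zs = Some x} =
      (\<Sum>x\<in>G. card {zs \<in> permutations_of_set T. find Q zs = Some x})"
    using \<open>finite G\<close> T by (simp only:) (intro card_UN_disjoint; auto)
  then have "card {zs \<in> permutations_of_set T. \<exists>x\<in>G. find Q zs = Some x} * card {x \<in> T. Q x} =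
      (\<Sum>x\<in>G. card {zs \<in> permutations_of_set T. find Q zs = Some x} * card {x \<in> T. Q x})"
    by (simp only: sum_distrib_right)
  also have "\<dots> = (\<Sum>x\<in>G. fact (card T))"
    using G T by (intro sum.cong refl card_find_eq_Some_mult) auto
  finally show ?thesis
    by simp
qed

lemma set_drop_permutations_of_set:
  assumes "p \<in> permutations_of_set U"
  shows "set (drop m p) = U - set (take m p)"
proof -
  have "distinct (take m p @ drop m p)" "set (take m p @ drop m p) = U"
    using assms by (simp_all add: permutations_of_set_def)
  then show ?thesis
    unfolding distinct_append set_append by blast
qed

lemma permutations_of_set_eq_UN_append:
  assumes U: "finite U" and m: "m \<le> card U"
  shows "{p \<in> permutations_of_set U. P (set (take m p)) (drop m p)} =
    (\<Union>S\<in>{S. S \<subseteq> U \<and> card S = m}. (\<lambda>(ys, zs). ys @ zs) `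
       (permutations_of_set S \<times> {zs \<in> permutations_of_set (U - S). P S zs}))"
proof (intro equalityI subsetI)
  fix p assume "p \<in> {p \<in> permutations_of_set U. P (set (take m p)) (drop m p)}"
  then have p: "p \<in> permutations_of_set U" "set p = U" "distinct p" "P (set (take m p)) (drop m p)"
    by (auto simp: permutations_of_set_def)
  define S where "S = set (take m p)"
  have "length p = card U"
    using p by (metis distinct_card)
  then have "S \<subseteq> U \<and> card S = m"
    using p m set_take_subset[of m p] by (auto simp: S_def distinct_card)
  moreover have "take m p \<in> permutations_of_set S"
    using p by (auto simp: S_def permutations_of_set_def)
  moreover have "drop m p \<in> {zs \<in> permutations_of_set (U - S). P S zs}"
    using p set_drop_permutations_of_set[of p U m] by (auto simp: S_def permutations_of_set_def)
  ultimately show "p \<in> (\<Union>S\<in>{S. S \<subseteq> U \<and> card S = m}. (\<lambda>(ys, zs). ys @ zs) `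
      (permutations_of_set S \<times> {zs \<in> permutations_of_set (U - S). P S zs}))"
    by (intro UN_I[of S] image_eqI[of _ _ "(take m p, drop m p)"]) auto
next
  fix p assume "p \<in> (\<Union>S\<in>{S. S \<subseteq> U \<and> card S = m}. (\<lambda>(ys, zs). ys @ zs) `
      (permutations_of_set S \<times> {zs \<in> permutations_of_set (U - S). P S zs}))"
  then obtain S ys zs where S: "S \<subseteq> U" "card S = m" "p = ys @ zs" "ys \<in> permutations_of_set S"
      "zs \<in> permutations_of_set (U - S)" "P S zs"
    by auto
  then have "length ys = m"
    using U by (auto simp: finite_subset length_finite_permutations_of_set)
  then show "p \<in> {p \<in> permutations_of_set U. P (set (take m p)) (drop m p)}"
    using S by (auto simp: permutations_of_set_def)
qed

lemma card_permutations_of_set_split: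
  assumes U: "finite U" and m: "m \<le> card U"
  shows "card {p \<in> permutations_of_set U. P (set (take m p)) (drop m p)} =
    (\<Sum>S\<in>{S. S \<subseteq> U \<and> card S = m}. fact m * card {zs \<in> permutations_of_set (U - S). P S zs})"
proof -
  define Z where "Z S = {zs \<in> permutations_of_set (U - S). P S zs}" for S
  define F where "F = {S. S \<subseteq> U \<and> card S = m}"
  let ?app = "\<lambda>(ys, zs). ys @ zs"
  have "finite F"
    using U unfolding F_def by (auto intro: finite_subset[of _ "Pow U"])
  have length_ys: "length ys = m" if "S \<in> F" "ys \<in> permutations_of_set S" for S ys
    using that U by (auto simp: F_def finite_subset length_finite_permutations_of_set)
  have set_take: "set (take m p) = S" if "p \<in> ?app ` (permutations_of_set S \<times> Z S)" "S \<in> F" for p S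
    using that length_ys by (auto simp: permutations_of_set_def)
  have "card {p \<in> permutations_of_set U. P (set (take m p)) (drop m p)} =
      card (\<Union>S\<in>F. ?app ` (permutations_of_set S \<times> Z S))"
    unfolding permutations_of_set_eq_UN_append[OF U m] Z_def F_def ..
  also have "\<dots> = (\<Sum>S\<in>F. card (?app ` (permutations_of_set S \<times> Z S)))"
  proof (rule card_UN_disjoint[OF \<open>finite F\<close>])
    show "\<forall>S\<in>F. finite (?app ` (permutations_of_set S \<times> Z S))"
      by (simp add: Z_def)
    show "\<forall>S\<in>F. \<forall>S'\<in>F. S \<noteq> S' \<longrightarrow>
        ?app ` (permutations_of_set S \<times> Z S) \<inter> ?app ` (permutations_of_set S' \<times> Z S') = {}"
      using set_take by blast
  qed
  also have "\<dots> = (\<Sum>S\<in>F. fact m * card (Z S))"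
  proof (rule sum.cong[OF refl])
    fix S assume "S \<in> F"
    then have "inj_on ?app (permutations_of_set S \<times> Z S)"
      using length_ys by (auto simp: inj_on_def)
    then show "card (?app ` (permutations_of_set S \<times> Z S)) = fact m * card (Z S)"
      using \<open>S \<in> F\<close> U rev_finite_subset[of U S] by (simp add: card_image card_cartesian_product F_def)
  qed
  finally show ?thesis
    by (simp add: Z_def F_def)
qed


section \<open>Labelled items\<close>

definition item_rank :: "nat \<Rightarrow> nat \<Rightarrow> nat" where
  "item_rank k i = i div k + 1"

lemma image_mset_item_rank:
  assumes "k > 0"
  shows "image_mset (item_rank k) (mset_set {0..<k * n}) = rank_mset n k"
proof (induction n)
  case (Suc n)
  have split: "{0..<k * Suc n} = {0..<k * n} \<union> {k * n..<k * n + k}"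
    by auto
  have block: "image_mset (item_rank k) (mset_set {k * n..<k * n + k}) = replicate_mset k (Suc n)"
  proof -
    have "item_rank k x = Suc n" if "x \<in> {k * n..<k * n + k}" for x
    proof -
      have "x div k = n"
        using that by (intro div_nat_eqI) (simp_all add: mult.commute)
      then show ?thesis
        by (simp add: item_rank_def)
    qed
    then have "image_mset (item_rank k) (mset_set {k * n..<k * n + k}) =
        image_mset (\<lambda>_. Suc n) (mset_set {k * n..<k * n + k})"
      by (intro image_mset_cong) auto
    then show ?thesis
      by (simp add: image_mset_const_eq)
  qed
  have "rank_mset (Suc n) k = rank_mset n k + replicate_mset k (Suc n)"
    by (simp add: rank_mset_def)
  then show ?case
    unfolding split using Suc block by (subst mset_set_Union) auto
qed (simp add: rank_mset_def)

lemma arrivals_eq_map_item_rank: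
  assumes "k > 0"
  shows "arrivals n k = map (item_rank k) ` permutations_of_set {0..<k * n}"
  unfolding arrivals_def image_mset_item_rank[OF assms, symmetric]
  by (simp add: permutations_of_multiset_image permutations_of_set_altdef)

definition count_fact_prod :: "'a multiset \<Rightarrow> nat" where
  "count_fact_prod A = (\<Prod>x\<in>set_mset A. fact (count A x))"

lemma count_fact_prod_add_mset: "count_fact_prod (add_mset x A) = (count A x + 1) * count_fact_prod A"
proof -
  have "(\<Prod>y\<in>set_mset (add_mset x A). fact (count (add_mset x A) y)) =
      (\<Prod>y\<in>set_mset (add_mset x A). (if y = x then count A x + 1 else 1) * fact (count A y))"
    by (intro prod.cong) simp_all
  also have "\<dots> = (count A x + 1) * (\<Prod>y\<in>set_mset (add_mset x A). fact (count A y))"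
    by (simp add: prod.distrib)
  also have "(\<Prod>y\<in>set_mset (add_mset x A). fact (count A y)) = (\<Prod>y\<in>set_mset A. fact (count A y))"
    by (intro prod.mono_neutral_right) (auto simp: not_in_iff)
  finally show ?thesis
    unfolding count_fact_prod_def .
qed

lemma permutations_of_set_map_eq_Cons:
  "{p \<in> permutations_of_set L. map r p = x # xs} =
    (\<Union>a\<in>{a \<in> L. r a = x}. (#) a ` {p \<in> permutations_of_set (L - {a}). map r p = xs})"
proof (intro equalityI subsetI)
  fix p assume "p \<in> {p \<in> permutations_of_set L. map r p = x # xs}"
  then obtain a p' where "p = a # p'" "r a = x" "map r p' = xs" "set p = L" "distinct p"
    by (cases p) (auto simp: permutations_of_set_def)
  then show "p \<in> (\<Union>a\<in>{a \<in> L. r a = x}. (#) a ` {p \<in> permutations_of_set (L - {a}). map r p = xs})"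
    by (auto simp: permutations_of_set_def)
next
  fix p assume "p \<in> (\<Union>a\<in>{a \<in> L. r a = x}. (#) a ` {p \<in> permutations_of_set (L - {a}). map r p = xs})"
  then obtain a p' where "a \<in> L" "r a = x" "p = a # p'" "p' \<in> permutations_of_set (L - {a})" "map r p' = xs"
    by auto
  then show "p \<in> {p \<in> permutations_of_set L. map r p = x # xs}"
    by (auto simp: permutations_of_set_def)
qed

lemma card_map_eq_permutations_of_set:
  assumes "finite L" "mset xs = image_mset r (mset_set L)"
  shows "card {p \<in> permutations_of_set L. map r p = xs} = count_fact_prod (mset xs)"
  using assms
proof (induction xs arbitrary: L)
  case Nil
  then show ?case
    by (simp add: mset_set_empty_iff count_fact_prod_def)
next
  case (Cons x xs L)
  define X where "X = {a \<in> L. r a = x}"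
  have "finite X"
    using Cons.prems(1) by (simp add: X_def)
  then have "card {p \<in> permutations_of_set L. map r p = x # xs} =
      (\<Sum>a\<in>X. card {p \<in> permutations_of_set (L - {a}). map r p = xs})"
    unfolding permutations_of_set_map_eq_Cons X_def[symmetric]
    by (subst card_UN_disjoint) (auto simp: card_image)
  also have "\<dots> = (\<Sum>a\<in>X. count_fact_prod (mset xs))"
  proof (intro sum.cong refl Cons.IH)
    fix a assume a: "a \<in> X"
    then have "mset_set L = add_mset a (mset_set (L - {a}))"
      using Cons.prems(1) by (simp add: X_def mset_set.remove)
    then show "mset xs = image_mset r (mset_set (L - {a}))"
      using Cons.prems(2) a by (simp add: X_def)
  qed (use Cons.prems in simp)
  also have "\<dots> = card X * count_fact_prod (mset xs)"
    by simp
  also have "card X = count (mset (x # xs)) x"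
  proof -
    have "count (image_mset r (mset_set L)) x = (\<Sum>y | y \<in># mset_set L \<and> x = r y. count (mset_set L) y)"
      by (rule count_image_mset')
    also have "\<dots> = card X"
      using Cons.prems(1) by (simp add: X_def eq_commute)
    finally show ?thesis
      using Cons.prems(2) by simp
  qed
  finally show ?case
    by (simp add: count_fact_prod_add_mset)
qed

lemma card_permutations_of_set_map:
  assumes L: "finite L"
  shows "card {p \<in> permutations_of_set L. W (map r p)} =
    card {xs \<in> map r ` permutations_of_set L. W xs} * count_fact_prod (image_mset r (mset_set L))"
proof -
  define X where "X = {xs \<in> map r ` permutations_of_set L. W xs}"
  have "{p \<in> permutations_of_set L. W (map r p)} = (\<Union>xs\<in>X. {p \<in> permutations_of_set L. map r p = xs})"
    by (auto simp: X_def)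
  then have "card {p \<in> permutations_of_set L. W (map r p)} =
      (\<Sum>xs\<in>X. card {p \<in> permutations_of_set L. map r p = xs})"
    by (simp only:) (rule card_UN_disjoint; simp add: X_def; blast)
  also have "\<dots> = (\<Sum>xs\<in>X. count_fact_prod (image_mset r (mset_set L)))"
  proof (rule sum.cong[OF refl])
    fix xs assume "xs \<in> X"
    then obtain p where p: "p \<in> permutations_of_set L" "xs = map r p"
      unfolding X_def by blast
    then have "mset p = mset_set L"
      by (auto simp: permutations_of_set_def mset_set_set)
    then have "mset xs = image_mset r (mset_set L)"
      using p(2) by simp
    then show "card {p \<in> permutations_of_set L. map r p = xs} = count_fact_prod (image_mset r (mset_set L))"
      using card_map_eq_permutations_of_set[OF L, of xs r] by simp
  qed
  finally show ?thesis
    by (simp add: X_def)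
qed

lemma win_prob_eq_card_labelled:
  assumes k: "k > 0"
  shows "win_prob n k M =
    real (card {p \<in> permutations_of_set {0..<k * n}. strategy_wins n M (map (item_rank k) p)}) / fact (k * n)"
proof -
  define g where "g = count_fact_prod (image_mset (item_rank k) (mset_set {0..<k * n}))"
  have "g > 0"
    by (simp add: g_def count_fact_prod_def)
  have wins: "card {p \<in> permutations_of_set {0..<k * n}. strategy_wins n M (map (item_rank k) p)} =
      card {xs \<in> arrivals n k. strategy_wins n M xs} * g"
    unfolding arrivals_eq_map_item_rank[OF k] g_def by (rule card_permutations_of_set_map) simp
  have "fact (k * n) = card (arrivals n k) * g"
    using card_permutations_of_set_map[of "{0..<k * n}" "\<lambda>_. True" "item_rank k"]
    unfolding arrivals_eq_map_item_rank[OF k] g_def by simp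
  then have "(fact (k * n) :: real) = real (card (arrivals n k)) * real g"
    by (metis of_nat_fact of_nat_mult)
  then show ?thesis
    using \<open>g > 0\<close> unfolding win_prob_def wins by simp
qed

lemma item_rank_le_iff: "k > 0 \<Longrightarrow> item_rank k x \<le> v \<longleftrightarrow> x < k * v"
  unfolding item_rank_def using div_less_iff_less_mult[of k x v] by (simp add: mult.commute Suc_le_eq)

lemma item_rank_ge_iff: "k > 0 \<Longrightarrow> m \<le> item_rank k x \<longleftrightarrow> k * (m - 1) \<le> x"
  unfolding item_rank_def using div_less_iff_less_mult[of k x "m - 1"] by (auto simp: mult.commute)


section \<open>The winning probability as a finite series\<close>

text \<open>The probability of winning, given that the first \<open>M\<close> items have top rank \<open>n - t\<close> and exactly
  \<open>j\<close> of the \<open>k\<close> items of that rank are among them: the next item selected is uniformly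
  distributed among the \<open>k - j + k t\<close> remaining items of rank at least \<open>n - t\<close>, of which
  \<open>k\<close> (or \<open>k - j\<close> if \<open>t = 0\<close>) have rank \<open>n\<close>.\<close>
definition cond_win_prob :: "nat \<Rightarrow> nat \<Rightarrow> nat \<Rightarrow> real" where
  "cond_win_prob k t j = (if t = 0 then real (k - j) else real k) / real (k - j + k * t)"

text \<open>The probability that the top rank among the first \<open>M\<close> items is \<open>n - t\<close> and exactly \<open>j\<close>
  of them have that rank.\<close>
definition top_rank_prob :: "nat \<Rightarrow> nat \<Rightarrow> nat \<Rightarrow> nat \<Rightarrow> nat \<Rightarrow> real" where
  "top_rank_prob k n M t j =
     (if j \<le> M then real (k choose j) * real ((k * (n - t - 1)) choose (M - j)) / real ((k * n) choose M)
      else 0)"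

definition win_term :: "nat \<Rightarrow> nat \<Rightarrow> nat \<Rightarrow> nat \<Rightarrow> real" where
  "win_term k n M t =
     (if t < n then \<Sum>j = 1..k. top_rank_prob k n M t j * cond_win_prob k t j else 0)"

locale labelled_items =
  fixes k n M :: nat
  assumes k: "k > 0" and n: "n \<ge> 1" and M: "1 \<le> M" "M < k * n"
begin

abbreviation items :: "nat set" where
  "items \<equiv> {0..<k * n}"

definition first_sets :: "nat set set" where
  "first_sets = {S. S \<subseteq> items \<and> card S = M}"

definition top_rank :: "nat set \<Rightarrow> nat" where
  "top_rank S = Max (item_rank k ` S)"

definition top_count :: "nat set \<Rightarrow> nat" where
  "top_count S = card {x \<in> S. item_rank k x = top_rank S}"

definition eligible_items :: "nat set \<Rightarrow> nat set" where
  "eligible_items S = {x \<in> items - S. top_rank S \<le> item_rank k x}"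

definition best_items :: "nat set \<Rightarrow> nat set" where
  "best_items S = {x \<in> items - S. item_rank k x = n}"

lemma item_rank_in_items: "x \<in> items \<Longrightarrow> 1 \<le> item_rank k x \<and> item_rank k x \<le> n"
  using item_rank_le_iff[OF k, of x n] by (auto simp: item_rank_def)

lemma items_rank_eq:
  assumes "v \<le> n"
  shows "{x \<in> items. item_rank k x = v} = {k * (v - 1)..<k * v}"
proof -
  have "item_rank k x = v \<longleftrightarrow> k * (v - 1) \<le> x \<and> x < k * v" for x
    using item_rank_le_iff[OF k, of x v] item_rank_ge_iff[OF k, of v x] by linarith
  moreover have "k * v \<le> k * n"
    using assms by (rule mult_le_mono2)
  ultimately show ?thesis
    unfolding set_eq_iff mem_Collect_eq atLeastLessThan_iff by arith
qed

lemma card_items_rank_eq: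
  assumes "1 \<le> v" "v \<le> n"
  shows "card {x \<in> items. item_rank k x = v} = k"
proof -
  have "k * v = k * (v - 1) + k"
    using assms by (cases v) auto
  then show ?thesis
    unfolding items_rank_eq[OF assms(2)] by simp
qed

lemma items_rank_ge: "{x \<in> items. m \<le> item_rank k x} = {k * (m - 1)..<k * n}"
  unfolding set_eq_iff mem_Collect_eq atLeastLessThan_iff item_rank_ge_iff[OF k] by arith

lemma items_rank_less:
  assumes "m \<le> n"
  shows "{x \<in> items. item_rank k x < m} = {0..<k * (m - 1)}"
proof -
  have "item_rank k x < m \<longleftrightarrow> x < k * (m - 1)" for x
    using item_rank_ge_iff[OF k, of m x] by linarith
  moreover have "k * (m - 1) \<le> k * n"
    using assms by (intro mult_le_mono2) simp
  ultimately show ?thesis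
    unfolding set_eq_iff mem_Collect_eq atLeastLessThan_iff by arith
qed

lemma first_setD:
  assumes "S \<in> first_sets"
  shows "S \<subseteq> items" "card S = M" "finite S" "S \<noteq> {}"
proof -
  show "S \<subseteq> items" "card S = M"
    using assms by (simp_all add: first_sets_def)
  then show "finite S" "S \<noteq> {}"
    using M finite_subset[of S items] by auto
qed

lemma item_rank_le_top_rank: "S \<in> first_sets \<Longrightarrow> x \<in> S \<Longrightarrow> item_rank k x \<le> top_rank S"
  using first_setD[of S] by (simp add: top_rank_def)

lemma top_rank_attained: "S \<in> first_sets \<Longrightarrow> \<exists>x\<in>S. item_rank k x = top_rank S"
  using first_setD(3,4)[of S] Max_in[of "item_rank k ` S"] unfolding top_rank_def by (metis finite_imageI image_iff image_is_empty)

lemma top_rank_bounds: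
  assumes "S \<in> first_sets"
  shows "1 \<le> top_rank S \<and> top_rank S \<le> n"
proof -
  obtain x where "x \<in> S" "item_rank k x = top_rank S"
    using top_rank_attained[OF assms] by blast
  then show ?thesis
    using first_setD(1)[OF assms] item_rank_in_items[of x] by auto
qed

lemma top_count_bounds:
  assumes S: "S \<in> first_sets"
  shows "1 \<le> top_count S \<and> top_count S \<le> k"
proof
  have "{x \<in> S. item_rank k x = top_rank S} \<noteq> {}"
    using top_rank_attained[OF S] by blast
  then show "1 \<le> top_count S"
    using first_setD(3)[OF S] by (simp add: top_count_def Suc_le_eq card_gt_0_iff)
  have "top_count S \<le> card {x \<in> items. item_rank k x = top_rank S}"
    unfolding top_count_def using first_setD(1)[OF S] by (intro card_mono) auto
  then show "top_count S \<le> k"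
    using top_rank_bounds[OF S] card_items_rank_eq by simp
qed

lemma finite_first_sets: "finite first_sets"
  unfolding first_sets_def by (rule finite_subset[of _ "Pow items"]) auto

lemma card_eligible_items:
  assumes S: "S \<in> first_sets"
  shows "card (eligible_items S) = k - top_count S + k * (n - top_rank S)"
proof -
  define m where "m = top_rank S"
  have m: "1 \<le> m" "m \<le> n"
    using top_rank_bounds[OF S] by (auto simp: m_def)
  have "eligible_items S = {x \<in> items. m \<le> item_rank k x} - {x \<in> S. item_rank k x = m}" (is "_ = ?D")
  proof (rule set_eqI)
    fix x
    have "x \<in> S \<Longrightarrow> item_rank k x \<le> m"
      using item_rank_le_top_rank[OF S] by (simp add: m_def)
    then show "x \<in> eligible_items S \<longleftrightarrow> x \<in> {x \<in> items. m \<le> item_rank k x} - {x \<in> S. item_rank k x = m}"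
      using first_setD(1)[OF S] unfolding eligible_items_def m_def by auto
  qed
  then have "card (eligible_items S) = card ?D"
    by simp
  also have "\<dots> = card {x \<in> items. m \<le> item_rank k x} - card {x \<in> S. item_rank k x = m}"
    using first_setD(1,3)[OF S] by (intro card_Diff_subset) auto
  also have "card {x \<in> items. m \<le> item_rank k x} = k + k * (n - m)"
  proof -
    have "n = (m - 1) + (1 + (n - m))"
      using m by simp
    then have "k * n = k * ((m - 1) + (1 + (n - m)))"
      by (rule arg_cong)
    then have "k * n = k * (m - 1) + (k + k * (n - m))"
      by (simp only: add_mult_distrib2 nat_mult_1_right)
    then show ?thesis
      unfolding items_rank_ge by simp
  qed
  finally show ?thesis
    using top_count_bounds[OF S] by (simp add: m_def top_count_def)
qed

lemma card_best_items:
  assumes S: "S \<in> first_sets"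
  shows "card (best_items S) = (if top_rank S < n then k else k - top_count S)"
proof -
  have card_n: "card {x \<in> items. item_rank k x = n} = k"
    using n by (intro card_items_rank_eq) auto
  show ?thesis
  proof (cases "top_rank S < n")
    case True
    have "best_items S = {x \<in> items. item_rank k x = n}"
    proof (rule set_eqI)
      fix x
      have "x \<in> S \<Longrightarrow> item_rank k x < n"
        using item_rank_le_top_rank[OF S] True by fastforce
      then show "x \<in> best_items S \<longleftrightarrow> x \<in> {x \<in> items. item_rank k x = n}"
        unfolding best_items_def by auto
    qed
    then show ?thesis
      using True card_n by simp
  next
    case False
    then have "top_rank S = n"
      using top_rank_bounds[OF S] by simp
    then have "best_items S = {x \<in> items. item_rank k x = n} - {x \<in> S. item_rank k x = top_rank S}"
      (is "_ = ?D") by (auto simp: best_items_def)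
    then have "card (best_items S) = card ?D"
      by simp
    also have "\<dots> = card {x \<in> items. item_rank k x = n} - top_count S"
      unfolding top_count_def using first_setD(1,3)[OF S] \<open>top_rank S = n\<close> by (intro card_Diff_subset) auto
    finally show ?thesis
      using False card_n by simp
  qed
qed

lemma card_best_div_card_eligible:
  assumes S: "S \<in> first_sets"
  shows "real (card (best_items S)) / real (card (eligible_items S)) =
    cond_win_prob k (n - top_rank S) (top_count S)"
  using top_rank_bounds[OF S]
  by (simp add: card_best_items[OF S] card_eligible_items[OF S] cond_win_prob_def)

lemma top_count_le_M: "S \<in> first_sets \<Longrightarrow> top_count S \<le> M"
  using first_setD(2,3)[of S] card_mono[of S "{x \<in> S. item_rank k x = top_rank S}"]
  by (auto simp: top_count_def)

lemma union_in_first_sets_top: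
  assumes j: "1 \<le> j" "j \<le> M"
    and A: "A \<subseteq> {x \<in> items. item_rank k x = m}" "card A = j"
    and B: "B \<subseteq> {x \<in> items. item_rank k x < m}" "card B = M - j"
  shows "A \<union> B \<in> first_sets \<and> top_rank (A \<union> B) = m \<and> top_count (A \<union> B) = j"
proof -
  have fin: "finite A" "finite B"
    by (rule finite_subset[OF A(1)], simp, rule finite_subset[OF B(1)], simp)
  have rank_A: "item_rank k x = m" if "x \<in> A" for x
    using that A(1) by auto
  have rank_B: "item_rank k x < m" if "x \<in> B" for x
    using that B(1) by auto
  have "A \<inter> B = {}"
    using rank_A rank_B by fastforce
  then have "A \<union> B \<in> first_sets"
    using A B j(2) card_Un_disjoint[OF fin] unfolding first_sets_def by auto
  moreover have "top_rank (A \<union> B) = m"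
  proof -
    obtain a where "a \<in> A"
      using A(2) j(1) by fastforce
    moreover have "item_rank k x \<le> m" if "x \<in> A \<union> B" for x
      using that rank_A rank_B by fastforce
    ultimately show ?thesis
      unfolding top_rank_def using fin rank_A by (intro Max_eqI) auto
  qed
  moreover have "{x \<in> A \<union> B. item_rank k x = m} = A"
    using rank_A rank_B by fastforce
  ultimately show ?thesis
    using A by (simp add: top_count_def)
qed

lemma first_sets_top_eq_image:
  fixes m j :: nat
  assumes j: "1 \<le> j" "j \<le> M"
  defines "R \<equiv> {x \<in> items. item_rank k x = m}" and "L \<equiv> {x \<in> items. item_rank k x < m}"
  shows "{S \<in> first_sets. top_rank S = m \<and> top_count S = j} =
    (\<lambda>(A, B). A \<union> B) ` ({A. A \<subseteq> R \<and> card A = j} \<times> {B. B \<subseteq> L \<and> card B = M - j})"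
    (is "_ = _ ` ?D")
proof -
  have RL: "finite R" "finite L" "R \<inter> L = {}"
    by (auto simp: R_def L_def)
  show ?thesis
  proof (intro equalityI subsetI)
    fix S assume "S \<in> {S \<in> first_sets. top_rank S = m \<and> top_count S = j}"
    then have S: "S \<in> first_sets" "top_rank S = m" "top_count S = j"
      by auto
    have "x \<in> R \<or> x \<in> L" if "x \<in> S" for x
    proof -
      have "item_rank k x \<le> m" "x \<in> items"
        using that S item_rank_le_top_rank[of S x] first_setD(1)[OF S(1)] by auto
      then show ?thesis
        by (auto simp: R_def L_def)
    qed
    then have S_eq: "S = (S \<inter> R) \<union> (S \<inter> L)"
      by blast
    have "S \<inter> R = {x \<in> S. item_rank k x = top_rank S}"
      using first_setD(1)[OF S(1)] S(2) by (auto simp: R_def)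
    then have "card (S \<inter> R) = j"
      using S(3) by (simp add: top_count_def)
    moreover have "card (S \<inter> R) + card (S \<inter> L) = M"
    proof -
      have "(S \<inter> R) \<inter> (S \<inter> L) = {}"
        using RL(3) by blast
      then show ?thesis
        using card_Un_disjoint[of "S \<inter> R" "S \<inter> L"] RL S_eq first_setD(2)[OF S(1)] by simp
    qed
    ultimately have "(S \<inter> R, S \<inter> L) \<in> ?D"
      by auto
    then show "S \<in> (\<lambda>(A, B). A \<union> B) ` ?D"
      by (rule rev_image_eqI) (simp only: prod.case S_eq[symmetric])
  next
    fix S assume "S \<in> (\<lambda>(A, B). A \<union> B) ` ?D"
    then show "S \<in> {S \<in> first_sets. top_rank S = m \<and> top_count S = j}"
      using union_in_first_sets_top[OF j] unfolding R_def L_def by auto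
  qed
qed

lemma card_first_sets_top:
  assumes m: "1 \<le> m" "m \<le> n" and j: "1 \<le> j"
  shows "card {S \<in> first_sets. top_rank S = m \<and> top_count S = j} =
    (if j \<le> M then (k choose j) * ((k * (m - 1)) choose (M - j)) else 0)"
proof (cases "j \<le> M")
  case False
  then have empty: "{S \<in> first_sets. top_rank S = m \<and> top_count S = j} = {}"
    using top_count_le_M by fastforce
  show ?thesis
    unfolding empty using False by simp
next
  case True
  define R where "R = {x \<in> items. item_rank k x = m}"
  define L where "L = {x \<in> items. item_rank k x < m}"
  define D where "D = {A. A \<subseteq> R \<and> card A = j} \<times> {B. B \<subseteq> L \<and> card B = M - j}"
  have RL: "finite R" "finite L" "R \<inter> L = {}"
    by (auto simp: R_def L_def)
  have "inj_on (\<lambda>(A, B). A \<union> B) D"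
  proof (rule inj_onI, clarify)
    fix A B A' B' assume "(A, B) \<in> D" "(A', B') \<in> D" "A \<union> B = A' \<union> B'"
    then have "(A \<union> B) \<inter> R = (A' \<union> B') \<inter> R" "(A \<union> B) \<inter> L = (A' \<union> B') \<inter> L"
      by simp_all
    with \<open>(A, B) \<in> D\<close> \<open>(A', B') \<in> D\<close> RL(3) show "A = A' \<and> B = B'"
      unfolding D_def by blast
  qed
  moreover have "card R = k"
    unfolding R_def using m by (rule card_items_rank_eq)
  moreover have "card L = k * (m - 1)"
    unfolding L_def items_rank_less[OF m(2)] by simp
  ultimately show ?thesis
    using True RL first_sets_top_eq_image[OF j True]
    by (simp add: card_image D_def R_def L_def card_cartesian_product n_subsets)
qed

definition selects_best :: "nat set \<Rightarrow> nat list \<Rightarrow> bool" where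
  "selects_best S zs \<longleftrightarrow> (\<exists>x\<in>best_items S. find (\<lambda>x. top_rank S \<le> item_rank k x) zs = Some x)"

lemma strategy_wins_iff_selects_best:
  assumes p: "p \<in> permutations_of_set items"
  shows "strategy_wins n M (map (item_rank k) p) \<longleftrightarrow> selects_best (set (take M p)) (drop M p)"
proof -
  define S where "S = set (take M p)"
  define zs where "zs = drop M p"
  define Q where "Q = (\<lambda>x. top_rank S \<le> item_rank k x)"
  have set_zs: "set zs = items - S"
    unfolding S_def zs_def using p by (rule set_drop_permutations_of_set)
  have "Max (set (take M (map (item_rank k) p))) = top_rank S"
    by (simp add: top_rank_def S_def take_map)
  then have "strategy_wins n M (map (item_rank k) p) \<longleftrightarrow> (\<exists>x. find Q zs = Some x \<and> item_rank k x = n)"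
    unfolding strategy_wins_def drop_map find_map zs_def Q_def o_def
    by (auto split: option.split)
  also have "\<dots> \<longleftrightarrow> selects_best S zs"
  proof
    assume "\<exists>x. find Q zs = Some x \<and> item_rank k x = n"
    then obtain x where x: "find Q zs = Some x" "item_rank k x = n"
      by blast
    then have "x \<in> items - S"
      using find_Some_in_set[OF x(1)] set_zs by blast
    with x show "selects_best S zs"
      by (auto simp: selects_best_def best_items_def Q_def)
  qed (auto simp: selects_best_def best_items_def Q_def)
  finally show ?thesis
    unfolding S_def zs_def .
qed

lemma card_wins_labelled:
  "card {p \<in> permutations_of_set items. strategy_wins n M (map (item_rank k) p)} =
    (\<Sum>S\<in>first_sets. fact M * card {zs \<in> permutations_of_set (items - S). selects_best S zs})"
proof -
  have "{p \<in> permutations_of_set items. strategy_wins n M (map (item_rank k) p)} =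
      {p \<in> permutations_of_set items. selects_best (set (take M p)) (drop M p)}"
    using strategy_wins_iff_selects_best by blast
  then show ?thesis
    using card_permutations_of_set_split[of items M selects_best] M by (simp add: first_sets_def)
qed

lemma card_selects_best:
  assumes S: "S \<in> first_sets"
  shows "real (card {zs \<in> permutations_of_set (items - S). selects_best S zs}) =
    real (card (best_items S)) * fact (k * n - M) / real (card (eligible_items S))"
proof -
  have "best_items S \<subseteq> {x \<in> items - S. top_rank S \<le> item_rank k x}"
    using top_rank_bounds[OF S] by (auto simp: best_items_def)
  moreover have "card (items - S) = k * n - M"
    using first_setD[OF S] by (simp add: card_Diff_subset)
  ultimately have count: "card {zs \<in> permutations_of_set (items - S). selects_best S zs} * card (eligible_items S) =
      card (best_items S) * fact (k * n - M)"
    using card_find_in_mult[of "items - S" "best_items S" "\<lambda>x. top_rank S \<le> item_rank k x"]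
    unfolding selects_best_def eligible_items_def by simp
  show ?thesis
  proof (cases "card (eligible_items S) = 0")
    case True
    then have "best_items S = {}"
      using count by (simp add: best_items_def)
    then show ?thesis
      by (simp add: selects_best_def)
  next
    case False
    then show ?thesis
      using arg_cong[OF count, of real] by (simp add: field_simps)
  qed
qed

lemma sum_first_sets_cond_win_prob:
  "(\<Sum>S\<in>first_sets. cond_win_prob k (n - top_rank S) (top_count S)) =
    (\<Sum>t<n. \<Sum>j = 1..k. real (card {S \<in> first_sets. top_rank S = n - t \<and> top_count S = j}) * cond_win_prob k t j)"
proof -
  define f where "f S = (n - top_rank S, top_count S)" for S
  have "f ` first_sets \<subseteq> {..<n} \<times> {1..k}"
    using top_rank_bounds top_count_bounds by (fastforce simp: f_def)
  then have "(\<Sum>S\<in>first_sets. cond_win_prob k (n - top_rank S) (top_count S)) =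
      (\<Sum>y\<in>{..<n} \<times> {1..k}. \<Sum>S\<in>{S \<in> first_sets. f S = y}. cond_win_prob k (n - top_rank S) (top_count S))"
    by (intro sum.group[symmetric] finite_first_sets) auto
  also have "\<dots> = (\<Sum>y\<in>{..<n} \<times> {1..k}.
      real (card {S \<in> first_sets. top_rank S = n - fst y \<and> top_count S = snd y}) * cond_win_prob k (fst y) (snd y))"
  proof (intro sum.cong refl)
    fix y assume y: "y \<in> {..<n} \<times> {1..k}"
    then have "{S \<in> first_sets. f S = y} = {S \<in> first_sets. top_rank S = n - fst y \<and> top_count S = snd y}"
      using top_rank_bounds by (fastforce simp: f_def)
    then show "(\<Sum>S\<in>{S \<in> first_sets. f S = y}. cond_win_prob k (n - top_rank S) (top_count S)) =
        real (card {S \<in> first_sets. top_rank S = n - fst y \<and> top_count S = snd y}) * cond_win_prob k (fst y) (snd y)"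
      using y by auto
  qed
  finally show ?thesis
    by (simp add: sum.cartesian_product case_prod_beta)
qed

lemma win_prob_eq_sum_win_term: "win_prob n k M = (\<Sum>t<n. win_term k n M t)"
proof -
  define C where "C = real ((k * n) choose M)"
  have C: "C = fact (k * n) / (fact M * fact (k * n - M))"
    unfolding C_def using M by (simp add: binomial_fact)
  have "win_prob n k M = (\<Sum>S\<in>first_sets. fact M * (real (card (best_items S)) * fact (k * n - M) /
      real (card (eligible_items S)))) / fact (k * n)"
    using win_prob_eq_card_labelled[OF k] by (simp add: card_wins_labelled card_selects_best)
  also have "\<dots> = (\<Sum>S\<in>first_sets. real (card (best_items S)) / real (card (eligible_items S))) / C"
    unfolding C sum_divide_distrib by (intro sum.cong refl) (simp add: divide_inverse mult_ac)
  also have "\<dots> = (\<Sum>S\<in>first_sets. cond_win_prob k (n - top_rank S) (top_count S)) / C"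
    by (simp add: card_best_div_card_eligible)
  also have "\<dots> = (\<Sum>t<n. win_term k n M t)"
    unfolding sum_first_sets_cond_win_prob sum_divide_distrib
  proof (intro sum.cong refl)
    fix t assume t: "t \<in> {..<n}"
    have "real (card {S \<in> first_sets. top_rank S = n - t \<and> top_count S = j}) * cond_win_prob k t j / C =
        top_rank_prob k n M t j * cond_win_prob k t j" if "j \<in> {1..k}" for j
    proof -
      have "real (card {S \<in> first_sets. top_rank S = n - t \<and> top_count S = j}) / C = top_rank_prob k n M t j"
        using t that card_first_sets_top[of "n - t" j] by (auto simp: top_rank_prob_def C_def)
      then show ?thesis
        by (simp add: times_divide_eq_left[symmetric])
    qed
    then show "(\<Sum>j = 1..k. real (card {S \<in> first_sets. top_rank S = n - t \<and> top_count S = j}) *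
        cond_win_prob k t j / C) = win_term k n M t"
      using t by (simp add: win_term_def)
  qed
  finally show ?thesis .
qed

end


section \<open>The limit of the winning probability\<close>

lemma fact_eq_fact_diff_mult_prod:
  assumes "a \<le> N"
  shows "(fact N :: real) = fact (N - a) * (\<Prod>i<a. real (N - i))"
  using assms
proof (induction a)
  case (Suc a)
  then have "(fact (N - a) :: real) = real (N - a) * fact (N - Suc a)"
    by (metis Suc_diff_Suc Suc_le_lessD diff_Suc_1 fact_Suc of_nat_Suc)
  then show ?case
    using Suc by (simp add: mult_ac)
qed simp

lemma binomial_ratio_eq_prod:
  fixes N M a j :: nat
  assumes "j \<le> M" "M \<le> N" "j \<le> a" "a \<le> N" "M - j \<le> N - a"
  shows "real ((N - a) choose (M - j)) / real (N choose M) =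
    (\<Prod>i<j. real (M - i) / real (N - i)) * (\<Prod>i<a - j. real (N - M - i) / real (N - j - i))"
proof -
  have fN: "(fact N :: real) = fact (N - j) * (\<Prod>i<j. real (N - i))"
    using assms by (intro fact_eq_fact_diff_mult_prod) auto
  have fNj: "(fact (N - j) :: real) = fact (N - a) * (\<Prod>i<a - j. real (N - j - i))"
    using fact_eq_fact_diff_mult_prod[of "a - j" "N - j"] assms by simp
  have fM: "(fact M :: real) = fact (M - j) * (\<Prod>i<j. real (M - i))"
    using assms by (intro fact_eq_fact_diff_mult_prod) auto
  have fNM: "(fact (N - M) :: real) = fact (N - M - (a - j)) * (\<Prod>i<a - j. real (N - M - i))"
    using assms by (intro fact_eq_fact_diff_mult_prod) auto
  have "N - a - (M - j) = N - M - (a - j)"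
    using assms by auto
  then have b1: "real ((N - a) choose (M - j)) = fact (N - a) / (fact (M - j) * fact (N - M - (a - j)))"
    using assms by (subst binomial_fact) (auto simp: add.commute)
  have b2: "real (N choose M) = fact N / (fact M * fact (N - M))"
    using assms by (subst binomial_fact) auto
  have "(\<Prod>i<j. real (N - i)) \<noteq> 0" "(\<Prod>i<a - j. real (N - j - i)) \<noteq> 0"
    using assms by (auto simp: prod_zero_iff)
  then show ?thesis
    unfolding b1 b2 fN fNj fM fNM prod_dividef by (simp add: field_simps)
qed

lemma diff_div_diff_le:
  fixes L N i j :: nat
  assumes "j \<le> L" "L \<le> N" "i + j < N"
  shows "real (N - L - i) / real (N - j - i) \<le> real (N - L) / real (N - j)"
proof -
  have "real (N - L - i) * real (N - j) \<le> real (N - L) * real (N - j - i)"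
  proof (cases "i \<le> N - L")
    case True
    have "real i * real (N - L) \<le> real i * real (N - j)"
      using assms by (intro mult_left_mono) auto
    then show ?thesis
      using True assms by (simp add: of_nat_diff algebra_simps)
  qed simp
  moreover have "real (N - j - i) > 0" "real (N - j) > 0"
    using assms by auto
  ultimately show ?thesis
    by (simp add: divide_simps)
qed

lemma binomial_ratio_le_power:
  fixes N M a j :: nat and r :: real
  assumes "j \<le> M" "M \<le> N" "j \<le> a" "a \<le> N" and r: "real (N - M) / real (N - j) \<le> r"
  shows "real ((N - a) choose (M - j)) / real (N choose M) \<le> r ^ (a - j)"
proof (cases "M - j \<le> N - a")
  case True
  have "(\<Prod>i<j. real (M - i) / real (N - i)) \<le> 1"
    using assms by (intro prod_le_1) (auto simp: divide_le_eq_1)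
  moreover have "(\<Prod>i<a - j. real (N - M - i) / real (N - j - i)) \<le> (\<Prod>i<a - j. r)"
  proof (intro prod_mono conjI)
    fix i assume "i \<in> {..<a - j}"
    then have "real (N - M - i) / real (N - j - i) \<le> real (N - M) / real (N - j)"
      using assms by (intro diff_div_diff_le) auto
    then show "real (N - M - i) / real (N - j - i) \<le> r"
      using r by linarith
  qed simp
  ultimately have "(\<Prod>i<j. real (M - i) / real (N - i)) * (\<Prod>i<a - j. real (N - M - i) / real (N - j - i))
      \<le> 1 * r ^ (a - j)"
    by (intro mult_mono) (auto intro: prod_nonneg)
  then show ?thesis
    using assms True by (simp add: binomial_ratio_eq_prod)
next
  case False
  have "0 \<le> r"
    using r by (rule order.trans[rotated]) simp
  then show ?thesis
    using False by (simp add: binomial_eq_0)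
qed

lemma tendsto_diff_ratio:
  fixes p q :: "nat \<Rightarrow> nat" and D :: "nat \<Rightarrow> real"
  assumes "(\<lambda>n. real (p n) / D n) \<longlonglongrightarrow> A" "(\<lambda>n. real (q n) / D n) \<longlonglongrightarrow> B" "B \<noteq> 0"
    and D: "filterlim D at_top sequentially"
    and "eventually (\<lambda>n. i \<le> p n \<and> i' \<le> q n) sequentially"
  shows "(\<lambda>n. real (p n - i) / real (q n - i')) \<longlonglongrightarrow> A / B"
proof -
  have "(\<lambda>n. real i / D n) \<longlonglongrightarrow> 0" "(\<lambda>n. real i' / D n) \<longlonglongrightarrow> 0"
    using D by (auto intro!: tendsto_divide_0 filterlim_at_top_imp_at_infinity)
  then have "(\<lambda>n. (real (p n) / D n - real i / D n) / (real (q n) / D n - real i' / D n))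
      \<longlonglongrightarrow> (A - 0) / (B - 0)"
    using assms by (intro tendsto_intros) auto
  moreover have "eventually (\<lambda>n. (real (p n) / D n - real i / D n) / (real (q n) / D n - real i' / D n) =
      real (p n - i) / real (q n - i')) sequentially"
    using assms(5) D[unfolded filterlim_at_top_dense, rule_format, of 0]
    by eventually_elim (auto simp: of_nat_diff diff_divide_distrib[symmetric])
  ultimately show ?thesis
    by (auto intro: Lim_transform_eventually)
qed

definition limit_win_term :: "nat \<Rightarrow> real \<Rightarrow> nat \<Rightarrow> real" where
  "limit_win_term k c t =
     (\<Sum>j = 1..k. real (k choose j) * c ^ j * (1 - c) ^ (k - j + k * t) * cond_win_prob k t j)"

lemma top_rank_prob_nonneg: "0 \<le> top_rank_prob k n M t j"
  by (simp add: top_rank_prob_def)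

lemma cond_win_prob_nonneg: "0 \<le> cond_win_prob k t j"
  by (simp add: cond_win_prob_def)

lemma cond_win_prob_le_1:
  assumes "j \<le> k"
  shows "cond_win_prob k t j \<le> 1"
proof (cases "t = 0")
  case False
  then have "k \<le> k - j + k * t"
    using mult_le_mono2[of 1 t k] by linarith
  then have "real k \<le> real (k - j + k * t)"
    by (simp only: of_nat_le_iff)
  then show ?thesis
    using False by (cases "k = 0") (simp_all add: cond_win_prob_def)
qed (simp add: cond_win_prob_def divide_le_eq_1)

locale proportional_threshold =
  fixes k :: nat and c :: real and M :: "nat \<Rightarrow> nat"
  assumes k: "k \<ge> 2" and c: "0 < c" "c < 1"
    and M_bounds: "\<And>n. n \<ge> 1 \<Longrightarrow> 1 \<le> M n \<and> M n \<le> k * n - 1"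
    and M_ratio: "(\<lambda>n. real (M n) / real (k * n)) \<longlonglongrightarrow> c"
begin

lemma filterlim_kn_at_top: "filterlim (\<lambda>n. real (k * n)) at_top sequentially"
proof -
  have "filterlim (\<lambda>n. real k * real n) at_top sequentially"
    using k by (intro filterlim_tendsto_pos_mult_at_top[OF tendsto_const] filterlim_real_sequentially) auto
  then show ?thesis by simp
qed

lemma eventually_M_le: "eventually (\<lambda>n. M n \<le> k * n) sequentially"
  using eventually_ge_at_top[of 1] by eventually_elim (metis M_bounds diff_le_self le_trans)

lemma kn_ratio_tendsto: "(\<lambda>n. real (k * n) / real (k * n)) \<longlonglongrightarrow> 1"
proof -
  have "eventually (\<lambda>n. 1 = real (k * n) / real (k * n)) sequentially"
    using eventually_ge_at_top[of 1] by eventually_elim (use k in auto)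
  then show ?thesis by (rule Lim_transform_eventually[OF tendsto_const])
qed

lemma complement_ratio_tendsto: "(\<lambda>n. real (k * n - M n) / real (k * n)) \<longlonglongrightarrow> 1 - c"
proof -
  have "(\<lambda>n. 1 - real (M n) / real (k * n)) \<longlonglongrightarrow> 1 - c"
    by (intro tendsto_intros M_ratio)
  moreover have "eventually (\<lambda>n. 1 - real (M n) / real (k * n) = real (k * n - M n) / real (k * n)) sequentially"
    using eventually_M_le eventually_ge_at_top[of 1]
    by eventually_elim (use k in \<open>auto simp: of_nat_diff diff_divide_distrib\<close>)
  ultimately show ?thesis by (rule Lim_transform_eventually)
qed

lemma eventually_M_ge: "eventually (\<lambda>n. K \<le> M n \<and> K \<le> k * n - M n) sequentially"
proof -
  have "filterlim (\<lambda>n. real (M n) / real (k * n) * real (k * n)) at_top sequentially"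
    by (rule filterlim_tendsto_pos_mult_at_top[OF M_ratio c(1) filterlim_kn_at_top])
  moreover have "filterlim (\<lambda>n. real (k * n - M n) / real (k * n) * real (k * n)) at_top sequentially"
    by (rule filterlim_tendsto_pos_mult_at_top[OF complement_ratio_tendsto _ filterlim_kn_at_top])
       (use c in auto)
  ultimately have "eventually (\<lambda>n. real K \<le> real (M n) / real (k * n) * real (k * n)) sequentially"
      "eventually (\<lambda>n. real K \<le> real (k * n - M n) / real (k * n) * real (k * n)) sequentially"
    unfolding filterlim_at_top by blast+
  then show ?thesis
    using eventually_ge_at_top[of 1]
  proof eventually_elim
    case (elim n)
    then have "real (k * n) \<noteq> 0" using k by auto
    then show ?case using elim(1,2) by (simp del: of_nat_mult)
  qed
qed

lemma top_rank_prob_tendsto: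
  assumes j: "j \<in> {1..k}"
  shows "(\<lambda>n. top_rank_prob k n (M n) t j) \<longlonglongrightarrow> real (k choose j) * c ^ j * (1 - c) ^ (k - j + k * t)"
proof -
  define a where "a = k * (t + 1)"
  have ja: "j \<le> a" "a - j = k - j + k * t" using j by (auto simp: a_def)
  define r1 where "r1 n i = real (M n - i) / real (k * n - i)" for n i
  define r2 where "r2 n i = real (k * n - M n - i) / real (k * n - (j + i))" for n i
  have eq: "eventually (\<lambda>n. top_rank_prob k n (M n) t j =
      real (k choose j) * ((\<Prod>i<j. r1 n i) * (\<Prod>i<a - j. r2 n i))) sequentially"
    using eventually_M_ge[of a] eventually_M_le
  proof eventually_elim
    case (elim n)
    have "k * (n - t - 1) = k * n - a" by (simp add: a_def diff_mult_distrib2 algebra_simps)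
    moreover have "M n - j \<le> k * n - a"
      using elim by linarith
    then have "real ((k * n - a) choose (M n - j)) / real ((k * n) choose (M n)) =
      (\<Prod>i<j. r1 n i) * (\<Prod>i<a - j. r2 n i)"
      using binomial_ratio_eq_prod[of j "M n" "k * n" a] elim ja unfolding r1_def r2_def
      by (simp add: diff_diff_left)
    ultimately show ?case
      using elim ja by (simp add: top_rank_prob_def times_divide_eq_right[symmetric])
  qed
  have r1_lim: "(\<lambda>n. r1 n i) \<longlonglongrightarrow> c / 1" for i
    unfolding r1_def
    by (rule tendsto_diff_ratio[OF M_ratio kn_ratio_tendsto _ filterlim_kn_at_top])
       (use eventually_M_ge[of i] in \<open>auto elim: eventually_mono\<close>)
  have r2_lim: "(\<lambda>n. r2 n i) \<longlonglongrightarrow> (1 - c) / 1" for i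
    unfolding r2_def
    by (rule tendsto_diff_ratio[OF complement_ratio_tendsto kn_ratio_tendsto _ filterlim_kn_at_top])
       (use eventually_M_ge[of "j + i"] in \<open>auto elim: eventually_mono\<close>)
  have "(\<lambda>n. real (k choose j) * ((\<Prod>i<j. r1 n i) * (\<Prod>i<a - j. r2 n i))) \<longlonglongrightarrow>
        real (k choose j) * ((\<Prod>i<j. c / 1) * (\<Prod>i<a - j. (1 - c) / 1))"
    by (intro tendsto_intros r1_lim r2_lim)
  then show ?thesis
    using eq by (simp add: ja mult.assoc Lim_transform_eventually eventually_mono)
qed

text \<open>Any fixed number in \<open>(1 - c, 1)\<close>, here \<open>1 - c / 2\<close>, eventually bounds the factors
  \<open>(k n - M n - i) / (k n - j - i)\<close> of the binomial ratio; this gives a geometric bound uniform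
  in \<open>n\<close>.\<close>
lemma eventually_top_rank_prob_le:
  "eventually (\<lambda>n. \<forall>t<n. \<forall>j\<in>{1..k}.
     top_rank_prob k n (M n) t j \<le> real (k choose j) * (1 - c / 2) ^ (k * t)) sequentially"
proof -
  have "(\<lambda>n. real (k * n - M n - 0) / real (k * n - k)) \<longlonglongrightarrow> (1 - c) / 1"
    by (rule tendsto_diff_ratio[OF complement_ratio_tendsto kn_ratio_tendsto _ filterlim_kn_at_top])
       (use eventually_ge_at_top[of 1] in \<open>auto elim: eventually_mono\<close>)
  then have "eventually (\<lambda>n. real (k * n - M n) / real (k * n - k) < 1 - c / 2) sequentially"
    using c by (intro order_tendstoD(2)) auto
  then show ?thesis
    using eventually_M_ge[of k] eventually_M_le eventually_ge_at_top[of 2]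
  proof eventually_elim
    case (elim n)
    show ?case
    proof (intro allI impI ballI)
      fix t j assume t: "t < n" and j: "j \<in> {1..k}"
      define a where "a = k * (t + 1)"
      have a: "j \<le> a" "a \<le> k * n" "k * t \<le> a - j"
        using j t mult_le_mono2[of "t + 1" n k] by (auto simp: a_def)
      have "k < k * n"
        using k elim(4) mult_le_mono2[of 2 n k] by linarith
      then have "0 < k * n - k" "k * n - k \<le> k * n - j"
        using j by auto
      then have "real (k * n - M n) / real (k * n - j) \<le> real (k * n - M n) / real (k * n - k)"
        by (intro frac_le) (simp_all only: of_nat_le_iff of_nat_0_less_iff of_nat_0_le_iff order.refl)
      then have "real ((k * n - a) choose (M n - j)) / real ((k * n) choose (M n)) \<le> (1 - c / 2) ^ (a - j)"
        using elim j a by (intro binomial_ratio_le_power) auto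
      also have "\<dots> \<le> (1 - c / 2) ^ (k * t)"
        using c a by (intro power_decreasing) auto
      finally have "real ((k * n - a) choose (M n - j)) / real ((k * n) choose (M n)) \<le> (1 - c / 2) ^ (k * t)" .
      moreover have "top_rank_prob k n (M n) t j =
          real (k choose j) * (real ((k * n - a) choose (M n - j)) / real ((k * n) choose (M n)))"
      proof -
        have "k * (n - t - 1) = k * n - a"
          by (simp add: a_def diff_mult_distrib2 algebra_simps)
        moreover have "j \<le> M n"
          using elim(2) j by auto
        ultimately show ?thesis
          by (simp add: top_rank_prob_def)
      qed
      ultimately show "top_rank_prob k n (M n) t j \<le> real (k choose j) * (1 - c / 2) ^ (k * t)"
        by (metis mult_left_mono of_nat_0_le_iff)
    qed
  qed
qed

lemma win_term_tendsto: "(\<lambda>n. win_term k n (M n) t) \<longlonglongrightarrow> limit_win_term k c t"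
proof -
  have "(\<lambda>n. \<Sum>j = 1..k. top_rank_prob k n (M n) t j * cond_win_prob k t j) \<longlonglongrightarrow> limit_win_term k c t"
    unfolding limit_win_term_def by (intro tendsto_intros top_rank_prob_tendsto) auto
  moreover have "eventually (\<lambda>n. (\<Sum>j = 1..k. top_rank_prob k n (M n) t j * cond_win_prob k t j) =
      win_term k n (M n) t) sequentially"
    using eventually_gt_at_top[of t] by eventually_elim (simp add: win_term_def)
  ultimately show ?thesis
    by (rule Lim_transform_eventually)
qed

lemma eventually_win_term_le:
  "eventually (\<lambda>n. \<forall>t. norm (win_term k n (M n) t) \<le> 2 ^ k * ((1 - c / 2) ^ k) ^ t) sequentially"
  using eventually_top_rank_prob_le
proof eventually_elim
  case (elim n)
  have binomial_sum: "(\<Sum>j = 1..k. real (k choose j)) \<le> 2 ^ k"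
  proof -
    have "(\<Sum>j = 1..k. k choose j) \<le> 2 ^ k"
      unfolding choose_row_sum[symmetric] by (rule sum_mono2) auto
    then show ?thesis
      by (metis of_nat_le_iff of_nat_sum of_nat_numeral of_nat_power)
  qed
  have "\<bar>win_term k n (M n) t\<bar> \<le> 2 ^ k * ((1 - c / 2) ^ k) ^ t" for t
  proof (cases "t < n")
    case True
    then have "\<bar>win_term k n (M n) t\<bar> = (\<Sum>j = 1..k. top_rank_prob k n (M n) t j * cond_win_prob k t j)"
      by (simp add: win_term_def top_rank_prob_nonneg cond_win_prob_nonneg sum_nonneg)
    also have "\<dots> \<le> (\<Sum>j = 1..k. real (k choose j) * (1 - c / 2) ^ (k * t))"
    proof (rule sum_mono)
      fix j assume j: "j \<in> {1..k}"
      then have "top_rank_prob k n (M n) t j * cond_win_prob k t j \<le> top_rank_prob k n (M n) t j"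
        by (intro mult_right_le_one_le top_rank_prob_nonneg cond_win_prob_nonneg cond_win_prob_le_1) auto
      also have "\<dots> \<le> real (k choose j) * (1 - c / 2) ^ (k * t)"
        using elim True j by blast
      finally show "top_rank_prob k n (M n) t j * cond_win_prob k t j \<le> real (k choose j) * (1 - c / 2) ^ (k * t)" .
    qed
    also have "\<dots> = (\<Sum>j = 1..k. real (k choose j)) * ((1 - c / 2) ^ k) ^ t"
      by (simp add: sum_distrib_right power_mult)
    also have "\<dots> \<le> 2 ^ k * ((1 - c / 2) ^ k) ^ t"
      using binomial_sum c by (intro mult_right_mono) auto
    finally show ?thesis .
  next
    case False
    then show ?thesis
      using c by (simp add: win_term_def)
  qed
  then show ?case
    by simp
qed

lemma sum_win_term_tendsto: "(\<lambda>n. \<Sum>t<n. win_term k n (M n) t) \<longlonglongrightarrow> suminf (limit_win_term k c)"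
proof -
  have "summable (\<lambda>t. 2 ^ k * ((1 - c / 2) ^ k) ^ t :: real)"
    using c k by (intro summable_mult summable_geometric) (auto simp: power_less_one_iff)
  moreover have "eventually (\<lambda>(t, n). norm (win_term k n (M n) t) \<le> 2 ^ k * ((1 - c / 2) ^ k) ^ t)
      (at_top \<times>\<^sub>F sequentially)"
    using eventually_win_term_le unfolding eventually_prod_sequentially eventually_sequentially by blast
  ultimately have "(\<lambda>n. suminf (\<lambda>t. win_term k n (M n) t)) \<longlonglongrightarrow> suminf (limit_win_term k c)"
    using tannerys_theorem[OF win_term_tendsto] by simp
  moreover have "suminf (\<lambda>t. win_term k n (M n) t) = (\<Sum>t<n. win_term k n (M n) t)" for n
    by (rule suminf_finite) (auto simp: win_term_def)
  ultimately show ?thesis by simp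
qed

end


section \<open>Summing the limit series\<close>

lemma power_has_integral_Icc:
  fixes x :: real assumes "0 \<le> x"
  shows "((\<lambda>y. y ^ n) has_integral x ^ Suc n / Suc n) {0..x}"
proof -
  have "((\<lambda>y. y ^ n) has_integral ((\<lambda>y. y ^ Suc n / Suc n) x - (\<lambda>y. y ^ Suc n / Suc n) 0)) {0..x}"
    using assms
    by (intro fundamental_theorem_of_calculus ballI has_real_derivative_iff_has_vector_derivative[THEN iffD1]
          DERIV_cdivide[OF DERIV_pow, THEN DERIV_cong]) simp_all
  then show ?thesis by simp
qed

lemma sums_power_div_eq_integral:
  fixes x :: real
  assumes x: "0 \<le> x" "x < 1" and "a \<ge> 1" "k \<ge> 1"
  shows "(\<lambda>t. x ^ (a + k * t) / real (a + k * t)) sums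
           integral {0..x} (\<lambda>y. y ^ (a - 1) / (1 - y ^ k))"
proof -
  define f where "f T y = (\<Sum>t<T. y ^ (a - 1 + k * t))" for T and y :: real
  define h where "h y = y ^ (a - 1) / (1 - y ^ k)" for y :: real
  have f_integral: "(f T has_integral (\<Sum>t<T. x ^ (a + k * t) / real (a + k * t))) {0..x}" for T
  proof -
    have "(f T has_integral (\<Sum>t<T. x ^ Suc (a - 1 + k * t) / real (Suc (a - 1 + k * t)))) {0..x}"
      unfolding f_def by (intro has_integral_sum power_has_integral_Icc x) auto
    then show ?thesis
      using \<open>a \<ge> 1\<close> by (simp add: Suc_diff_le)
  qed
  have yk: "0 \<le> y ^ k" "y ^ k < 1" if "y \<in> {0..x}" for y
    using that x \<open>k \<ge> 1\<close> by (auto simp: power_less_one_iff)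
  have h_cont: "continuous_on {0..x} h"
    unfolding h_def using yk by (intro continuous_intros) (auto simp: less_le)
  have f_lim: "(\<lambda>T. f T y) \<longlonglongrightarrow> h y" if "y \<in> {0..x}" for y
  proof -
    have "(\<lambda>t. y ^ (a - 1) * (y ^ k) ^ t) sums (y ^ (a - 1) * (1 / (1 - y ^ k)))"
      using yk[OF that] by (intro sums_mult geometric_sums) auto
    then show ?thesis unfolding sums_def f_def h_def by (simp add: power_add power_mult)
  qed
  have f_bound: "norm (f T y) \<le> h y" if "y \<in> {0..x}" for T y
  proof -
    have "0 \<le> y ^ t" for t using that by auto
    then have "0 \<le> f T y" "incseq (\<lambda>T. f T y)"
      unfolding f_def by (auto intro!: sum_nonneg incseq_SucI)
    then show ?thesis
      using incseq_le[OF _ f_lim[OF that]] by simp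
  qed
  have "(\<lambda>T. integral {0..x} (f T)) \<longlonglongrightarrow> integral {0..x} h"
    by (rule dominated_convergence(2)[where h=h])
       (use f_integral f_bound f_lim integrable_continuous_interval[OF h_cont] in
        \<open>auto simp: has_integral_integrable\<close>)
  moreover have "integral {0..x} (f T) = (\<Sum>t<T. x ^ (a + k * t) / real (a + k * t))" for T
    using f_integral by (rule integral_unique)
  ultimately show ?thesis
    unfolding sums_def h_def by simp
qed

lemma sums_power_div_eq_ln:
  fixes z :: real assumes "0 \<le> z" "z < 1"
  shows "(\<lambda>t. z ^ Suc t / real (Suc t)) sums (- ln (1 - z))"
proof -
  have "(\<lambda>n. - ((- (- z)) ^ n) / of_nat n) sums ln (1 + (- z))"
    by (rule ln_series') (use assms in auto)
  then have "(\<lambda>n. z ^ n / of_nat n) sums (- ln (1 - z))"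
    using sums_minus by fastforce
  then show ?thesis by (subst sums_Suc_iff) simp
qed

lemma limit_win_term_0:
  assumes "k \<ge> 1"
  shows "limit_win_term k c 0 = (\<Sum>l = 1..k - 1. real (k choose l) * c ^ l * (1 - c) ^ (k - l))"
proof -
  have "{1..k} = insert k {1..k - 1}"
    using assms by auto
  then show ?thesis
    unfolding limit_win_term_def cond_win_prob_def using assms by (auto intro!: sum.cong)
qed

lemma limit_win_term_Suc_sums:
  assumes k: "k \<ge> 2" and c: "0 < c" "c < 1"
  shows "(\<lambda>t. limit_win_term k c (Suc t)) sums
    ((\<Sum>l = 1..k - 1. real (k choose l) * c ^ l * real k *
        (integral {0..1 - c} (\<lambda>y. y ^ (k - l - 1) / (1 - y ^ k)) - (1 - c) ^ (k - l) / real (k - l)))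
     - c ^ k * ln (1 - (1 - c) ^ k))"
proof -
  define x where "x = 1 - c"
  have x: "0 < x" "x < 1"
    using c by (auto simp: x_def)
  define e where "e j = (\<lambda>t. x ^ (k - j + k * Suc t) / real (k - j + k * Suc t))" for j
  have e_sums: "e l sums (integral {0..x} (\<lambda>y. y ^ (k - l - 1) / (1 - y ^ k)) - x ^ (k - l) / real (k - l))"
    if "l \<in> {1..k - 1}" for l
  proof -
    have "(\<lambda>t. x ^ ((k - l) + k * t) / real ((k - l) + k * t)) sums
        integral {0..x} (\<lambda>y. y ^ (k - l - 1) / (1 - y ^ k))"
      using x that k by (intro sums_power_div_eq_integral) auto
    then have "(\<lambda>t. x ^ ((k - l) + k * Suc t) / real ((k - l) + k * Suc t)) sums
        (integral {0..x} (\<lambda>y. y ^ (k - l - 1) / (1 - y ^ k)) - x ^ (k - l) / real (k - l))"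
      by (subst sums_Suc_iff) simp
    then show ?thesis
      by (simp add: e_def)
  qed
  have e_k_sums: "e k sums (- ln (1 - x ^ k) / real k)"
  proof -
    have "(\<lambda>t. (x ^ k) ^ Suc t / real (Suc t) / real k) sums (- ln (1 - x ^ k) / real k)"
      using x k by (intro sums_divide sums_power_div_eq_ln) (auto simp: power_less_one_iff)
    moreover have "(x ^ k) ^ Suc t / real (Suc t) / real k = e k t" for t
      by (simp add: e_def power_mult[symmetric] power_add mult.commute distrib_left)
    ultimately show ?thesis
      by simp
  qed
  have "{1..k} = insert k {1..k - 1}"
    using k by auto
  then have "limit_win_term k c (Suc t) =
      (\<Sum>l = 1..k - 1. real (k choose l) * c ^ l * real k * e l t) + c ^ k * real k * e k t" for t
    using k unfolding limit_win_term_def cond_win_prob_def e_def x_def by (simp add: algebra_simps)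
  moreover have "(\<lambda>t. (\<Sum>l = 1..k - 1. real (k choose l) * c ^ l * real k * e l t) + c ^ k * real k * e k t)
      sums ((\<Sum>l = 1..k - 1. real (k choose l) * c ^ l * real k *
          (integral {0..x} (\<lambda>y. y ^ (k - l - 1) / (1 - y ^ k)) - x ^ (k - l) / real (k - l)))
        + c ^ k * real k * (- ln (1 - x ^ k) / real k))"
    using e_sums e_k_sums by (intro sums_add sums_sum sums_mult) auto
  ultimately show ?thesis
    using k unfolding x_def[symmetric] by simp
qed

text \<open>The \<open>t = 0\<close> term combines with the boundary terms of the tail series through
  \<open>k / (k - l) - 1 = l / (k - l)\<close>.\<close>
lemma limit_win_term_sums:
  fixes c :: real
  assumes k: "k \<ge> 2" and c: "0 < c" "c < 1"
  shows "limit_win_term k c sums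
    (- ((1 - c) ^ k) * (\<Sum>l = 1..k - 1. real (k choose l) * (c / (1 - c)) ^ l * (real l / real (k - l)))
     + real k * (\<Sum>l = 1..k - 1. real (k choose l) * c ^ l *
          integral {0..1 - c} (\<lambda>y. y ^ (k - l - 1) / (1 - y ^ k)))
     - c ^ k * ln (1 - (1 - c) ^ k))"
proof -
  define x where "x = 1 - c"
  have x: "0 < x" "x < 1"
    using c by (auto simp: x_def)
  define I where "I l = integral {0..x} (\<lambda>y. y ^ (k - l - 1) / (1 - y ^ k))" for l
  define b where "b l = real (k choose l) * c ^ l" for l
  have summand_eq: "b l * real k * (I l - x ^ (k - l) / real (k - l)) + b l * x ^ (k - l) =
      - (x ^ k) * (real (k choose l) * (c / x) ^ l * (real l / real (k - l))) + real k * (b l * I l)"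
    if "l \<in> {1..k - 1}" for l
  proof -
    have "x ^ k = x ^ l * x ^ (k - l)"
      using that by (auto simp flip: power_add)
    then have "x ^ k * (c / x) ^ l = c ^ l * x ^ (k - l)"
      using x by (simp add: power_divide)
    then have x_k: "- (x ^ k) * (real (k choose l) * (c / x) ^ l * (real l / real (k - l))) =
        b l * (- real l * x ^ (k - l) / real (k - l))"
      unfolding b_def by (simp add: algebra_simps)
    have "real k = real (k - l) + real l" "real (k - l) \<noteq> 0"
      using that by auto
    then have "real k * (I l - x ^ (k - l) / real (k - l)) + x ^ (k - l) =
        real k * I l - real l * x ^ (k - l) / real (k - l)"
      by (simp only:) (simp add: field_simps)
    then have "b l * real k * (I l - x ^ (k - l) / real (k - l)) + b l * x ^ (k - l) =
        b l * (real k * I l - real l * x ^ (k - l) / real (k - l))"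
      by (metis distrib_left mult.assoc)
    then show ?thesis
      unfolding x_k by (simp add: algebra_simps)
  qed
  have "limit_win_term k c sums
      ((\<Sum>l = 1..k - 1. b l * real k * (I l - x ^ (k - l) / real (k - l)))
       - c ^ k * ln (1 - x ^ k) + (\<Sum>l = 1..k - 1. b l * x ^ (k - l)))"
    using limit_win_term_Suc_sums[OF assms] limit_win_term_0[of k c] k
    unfolding b_def I_def x_def by (subst (asm) sums_Suc_iff) simp
  moreover have "(\<Sum>l = 1..k - 1. b l * real k * (I l - x ^ (k - l) / real (k - l)))
      + (\<Sum>l = 1..k - 1. b l * x ^ (k - l)) =
      - (x ^ k) * (\<Sum>l = 1..k - 1. real (k choose l) * (c / x) ^ l * (real l / real (k - l)))
      + real k * (\<Sum>l = 1..k - 1. b l * I l)"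
    unfolding sum.distrib[symmetric] sum_distrib_left
    by (intro sum.cong refl summand_eq)
  ultimately have "limit_win_term k c sums
      (- (x ^ k) * (\<Sum>l = 1..k - 1. real (k choose l) * (c / x) ^ l * (real l / real (k - l)))
       + real k * (\<Sum>l = 1..k - 1. b l * I l) - c ^ k * ln (1 - x ^ k))"
    by (smt (verit))
  then show ?thesis
    unfolding x_def I_def b_def .
qed

theorem theorem1:
  fixes k :: nat and c :: real and M :: "nat \<Rightarrow> nat"
  assumes "k \<ge> 2" and "0 < c" and "c < 1"
    and "\<And>n. n \<ge> 1 \<Longrightarrow> 1 \<le> M n \<and> M n \<le> k * n - 1"
    and "(\<lambda>n. real (M n) / real (k * n)) \<longlonglongrightarrow> c"
  shows "(\<lambda>n. win_prob n k (M n)) \<longlonglongrightarrow>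
    (- ((1 - c) ^ k) * (\<Sum>l = 1..k - 1. real (k choose l) * (c / (1 - c)) ^ l * (real l / real (k - l)))
     + real k * (\<Sum>l = 1..k - 1. real (k choose l) * c ^ l *
          integral {0..1 - c} (\<lambda>y. y ^ (k - l - 1) / (1 - y ^ k)))
     - c ^ k * ln (1 - (1 - c) ^ k))"
proof -
  interpret proportional_threshold k c M
    using assms by unfold_locales auto
  have "eventually (\<lambda>n. (\<Sum>t<n. win_term k n (M n) t) = win_prob n k (M n)) sequentially"
    using eventually_ge_at_top[of 1]
  proof eventually_elim
    case (elim n)
    have "2 \<le> k * n"
      using assms(1) elim mult_le_mono[of 2 k 1 n] by simp
    then have "labelled_items k n (M n)"
      using assms(1) elim M_bounds[OF elim] by unfold_locales auto
    then show ?case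
      by (rule labelled_items.win_prob_eq_sum_win_term[symmetric])
  qed
  then have "(\<lambda>n. win_prob n k (M n)) \<longlonglongrightarrow> suminf (limit_win_term k c)"
    by (rule Lim_transform_eventually[OF sum_win_term_tendsto])
  then show ?thesis
    using sums_unique[OF limit_win_term_sums[OF assms(1-3)]] by simp
qed

end
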